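(* Let $T>0$, $\theta_{S_0}>0$, a positive integer $k_{S_0}$, a constant $I_e\ge 0$, constants $\rho_B,\beta_0>0$, $\alpha_1>0$, $\lambda_B>0$, a real number $|\bar\phi_B|>1$, and $0<d_{00}<R:=\sqrt{|\mathcal{A}|/\pi}$ be given. Let $S_0\sim\Gamma(k_{S_0},\theta_{S_0})$; let $I_{B0}\sim\Gamma(|\bar\phi_B|-1,\rho_B\beta_0 d_{00}^{-\alpha_1})$; let $\Phi$ be a homogeneous Poisson point process of density $\lambda_B$ on the annulus $\{x\in\mathbb{R}^2: d_{00}\le\|x\|\le R\}$ with i.i.d. marks $\kappa_x\sim\Gamma(|\bar\phi_B|,1)$, and $I_B=\rho_B\sum_{x\in\Phi}\beta_0\|x\|^{-\alpha_1}\kappa_x$. Assume $S_0$, $I_{B0}$ and $I_B$ are mutually independent. Then $$\mathbb{P}\big[S_0>T(I_{B0}+I_B+I_e)\big]=\sum_{i=0}^{k_{S_0}-1}\frac{(-1)^i}{i!}\frac{\partial^i}{\partial s^i}\Big\{e^{-s\frac{TI_e}{\theta_{S_0}}}\mathcal{L}_{Y_{I_{B0}}}(s)\,\mathcal{L}_{Y_{I_B}}(s)\Big\}\Big|_{s=1},$$ where $\mathcal{L}_{Y_{I_{B0}}}$ and $\mathcal{L}_{Y_{I_B}}$ are the Laplace transforms of $Y_{I_{B0}}=TI_{B0}/\theta_{S_0}$ and $Y_{I_B}=TI_B/\theta_{S_0}$, given by $$\mathcal{L}_{Y_{I_{B0}}}(s)=\Big(1+s\frac{T\rho_B\beta_0d_{00}^{-\alpha_1}}{\theta_{S_0}}\Big)^{1-|\bar\phi_B|},$$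 $$\mathcal{L}_{Y_{I_B}}(s)=\exp\Big(2\pi\lambda_B\int_{d_{00}}^{R}\Big[\Big(1+s\frac{T\rho_B\beta_0r^{-\alpha_1}}{\theta_{S_0}}\Big)^{-|\bar\phi_B|}-1\Big]r\,\mathrm{d}r\Big).$$
   Context: $\Gamma(k,\theta)$ denotes the Gamma distribution with shape $k$ and scale $\theta$. In the application (hybrid cellular and cell-free network, conditioned on the distance $d_{00}$ from the typical UE to its nearest base station), $S_0$ is the (moment-matched) desired signal power, $I_{B0}$ the intra-cell interference, $I_B$ the inter-cell interference from base stations farther than $d_{00}$ in the network disk of area $|\mathcal{A}|$, $I_e=\bar I_A+\sigma^2$ is the average AP interference plus noise, $|\bar\phi_B|=\lambda_U/\lambda_B$ is the mean number of UEs per base station, and the left-hand side is the coverage probability $p_c(d_{00})$ at SINR threshold $T$. *)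

theory Defs
  imports "HOL-Probability.Probability"
begin

definition gamma_density :: "real \<Rightarrow> real \<Rightarrow> real \<Rightarrow> real" where
  "gamma_density k theta x =
     (if 0 < x then x powr (k - 1) * exp (- x / theta) / (Gamma k * theta powr k) else 0)"

definition gamma_measure :: "real \<Rightarrow> real \<Rightarrow> real measure" where
  "gamma_measure k theta = density lborel (\<lambda>x. ennreal (gamma_density k theta x))"

definition annulus :: "real \<Rightarrow> real \<Rightarrow> (real^2) set" where
  "annulus r1 r2 = {x. r1 \<le> norm x \<and> norm x \<le> r2}"

text \<open>A homogeneous PPP on a bounded set A is realised in the standard way: a Poisson(lam |A|)
  number of points, iid uniform on A (with iid marks).\<close>
definition ppp_interference ::
  "real \<Rightarrow> real \<Rightarrow> real \<Rightarrow> real \<Rightarrow> real \<Rightarrow> real \<Rightarrow> real \<Rightarrow> real measure" where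
  "ppp_interference lam r1 r2 rho beta0 alpha phi =
     measure_pmf (poisson_pmf (lam * measure lborel (annulus r1 r2))) \<bind>
       (\<lambda>n. distr (PiM {..<n} (\<lambda>_. uniform_measure lborel (annulus r1 r2) \<Otimes>\<^sub>M gamma_measure phi 1))
                 borel
                 (\<lambda>\<omega>. rho * (\<Sum>i<n. beta0 * norm (fst (\<omega> i)) powr (- alpha) * snd (\<omega> i))))"

end

theory Submission
  imports Defs
begin

text \<open>
  Put \<open>Y = T (I\<^sub>B\<^sub>0 + I\<^sub>B + I\<^sub>e) / \<theta>\<close>. As \<open>S\<^sub>0\<close> is Erlang and independent of \<open>Y\<close>,
  conditioning on \<open>Y\<close> turns the coverage probability into \<open>\<Sum>n<k. E[Y^n e^(-Y)] / n!\<close>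
  (the Erlang tail is a Poisson distribution function). Differentiating the Laplace transform
  \<open>L(s) = E[e^(-sY)]\<close> under the integral sign, which is legitimate because \<open>y^n e^(-sy)\<close> is
  bounded for \<open>y \<ge> 0\<close> and \<open>s\<close> bounded away from 0, gives \<open>E[Y^n e^(-Y)] = (-1)^n L^(n)(1)\<close>.
  Finally \<open>L\<close> factors by independence into the noise term, the Laplace transform of the Gamma
  variable \<open>I\<^sub>B\<^sub>0\<close> and the Laplace functional of the marked Poisson process; the latter is obtained
  by conditioning on the Poisson number of points, which are i.i.d., and integrating the Gamma
  Laplace transform of a mark in polar coordinates over the annulus.
\<close>

section \<open>Differentiation under the integral sign\<close>

lemma tendsto_integral_dominated_at:
  fixes f :: "real \<Rightarrow> 'a \<Rightarrow> real" and a :: real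
  assumes meas: "\<forall>\<^sub>F h in at a. f h \<in> borel_measurable M"
    and "g \<in> borel_measurable M" "integrable M w"
    and lim: "AE x in M. ((\<lambda>h. f h x) \<longlongrightarrow> g x) (at a)"
    and bound: "\<forall>\<^sub>F h in at a. AE x in M. norm (f h x) \<le> w x"
  shows "((\<lambda>h. \<integral>x. f h x \<partial>M) \<longlongrightarrow> (\<integral>x. g x \<partial>M)) (at a)"
  unfolding tendsto_at_iff_sequentially
proof (intro allI impI)
  fix X :: "nat \<Rightarrow> real"
  assume "\<forall>i. X i \<in> UNIV - {a}" "X \<longlonglongrightarrow> a"
  then have X: "filterlim X (at a) sequentially"
    by (simp add: filterlim_at)
  obtain N where N: "\<And>n. N \<le> n \<Longrightarrow> f (X n) \<in> borel_measurable M \<and> (AE x in M. norm (f (X n) x) \<le> w x)"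
    using filterlim_iff[THEN iffD1, OF X, rule_format, OF eventually_conj[OF meas bound]]
    by (auto simp: eventually_sequentially)
  show "((\<lambda>h. \<integral>x. f h x \<partial>M) \<circ> X) \<longlonglongrightarrow> (\<integral>x. g x \<partial>M)"
  proof (rule LIMSEQ_offset[where k=N], unfold comp_def, rule integral_dominated_convergence)
    show "AE x in M. (\<lambda>n. f (X (n + N)) x) \<longlonglongrightarrow> g x"
      using lim by eventually_elim (intro LIMSEQ_ignore_initial_segment filterlim_compose[OF _ X])
  qed (use N assms(2,3) in auto)
qed

lemma has_real_derivative_integral:
  fixes f f' :: "real \<Rightarrow> 'a \<Rightarrow> real"
  assumes S: "open S" "convex S" "s \<in> S"
    and int: "\<And>t. t \<in> S \<Longrightarrow> integrable M (f t)"
    and "f' s \<in> borel_measurable M" "integrable M w"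
    and deriv: "AE x in M. \<forall>t\<in>S. ((\<lambda>t. f t x) has_real_derivative f' t x) (at t) \<and> \<bar>f' t x\<bar> \<le> w x"
  shows "((\<lambda>t. \<integral>x. f t x \<partial>M) has_real_derivative (\<integral>x. f' s x \<partial>M)) (at s)"
proof -
  obtain e where e: "0 < e" "ball s e \<subseteq> S"
    using S openE by blast
  have near: "\<forall>\<^sub>F h in at 0. s + h \<in> S \<and> h \<noteq> 0"
    unfolding eventually_at using e by (intro exI[of _ e]) (auto simp: dist_norm)
  have "((\<lambda>h. \<integral>x. (f (s + h) x - f s x) / h \<partial>M) \<longlongrightarrow> (\<integral>x. f' s x \<partial>M)) (at 0)"
  proof (rule tendsto_integral_dominated_at)
    show "\<forall>\<^sub>F h in at 0. (\<lambda>x. (f (s + h) x - f s x) / h) \<in> borel_measurable M"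
      using near by eventually_elim (use int S in auto)
    show "AE x in M. ((\<lambda>h. (f (s + h) x - f s x) / h) \<longlongrightarrow> f' s x) (at 0)"
      using deriv by eventually_elim (use S in \<open>auto simp: DERIV_def\<close>)
    show "\<forall>\<^sub>F h in at 0. AE x in M. norm ((f (s + h) x - f s x) / h) \<le> w x"
      using near
    proof eventually_elim
      case (elim h)
      show ?case
        using deriv
      proof eventually_elim
        case (elim x)
        have "norm (f (s + h) x - f s x) \<le> w x * norm (s + h - s)"
          using S(2,3) \<open>s + h \<in> S \<and> h \<noteq> 0\<close> elim
          by (intro field_differentiable_bound[where S=S and f'="\<lambda>t. f' t x"])
             (auto intro: has_field_derivative_at_within)
        then show ?case
          using \<open>s + h \<in> S \<and> h \<noteq> 0\<close> by (auto simp: divide_le_eq)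
      qed
    qed
  qed fact+
  then have "((\<lambda>h. ((\<integral>x. f (s + h) x \<partial>M) - (\<integral>x. f s x \<partial>M)) / h) \<longlongrightarrow> (\<integral>x. f' s x \<partial>M)) (at 0)"
    by (rule Lim_transform_eventually)
       (use near in \<open>eventually_elim, use int S in auto\<close>)
  then show ?thesis
    unfolding DERIV_def .
qed

section \<open>Laplace transforms of nonnegative random variables\<close>

lemma power_mult_exp_le:
  fixes y a :: real
  assumes "0 \<le> y" "0 < a"
  shows "y ^ m * exp (- (a * y)) \<le> fact m / a ^ m"
proof -
  have exp_series: "(\<lambda>n. (a * y) ^ n / fact n) sums exp (a * y)"
    using exp_converges[of "a * y"] by (simp add: divide_inverse_commute)
  have "(\<Sum>n\<in>{m}. (a * y) ^ n / fact n) \<le> (\<Sum>n. (a * y) ^ n / fact n)"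
    using exp_series assms by (intro sum_le_suminf) (auto simp: sums_iff)
  then have "(a * y) ^ m / fact m \<le> exp (a * y)"
    using exp_series by (simp add: sums_iff)
  then have "a ^ m * y ^ m \<le> fact m * exp (a * y)"
    by (simp add: field_simps power_mult_distrib)
  then show ?thesis
    using assms by (simp add: field_simps exp_minus)
qed

context finite_measure
begin

lemma integrable_power_mult_exp:
  fixes Y :: "'a \<Rightarrow> real"
  assumes "Y \<in> borel_measurable M" "AE \<omega> in M. 0 \<le> Y \<omega>" "0 < t"
  shows "integrable M (\<lambda>\<omega>. Y \<omega> ^ n * exp (- t * Y \<omega>))"
  by (rule integrable_const_bound[where B="fact n / t ^ n"])
     (use assms power_mult_exp_le in \<open>auto elim!: eventually_mono\<close>)

lemma has_real_derivative_laplace_moment: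
  fixes Y :: "'a \<Rightarrow> real"
  assumes "Y \<in> borel_measurable M" and Y_nonneg: "AE \<omega> in M. 0 \<le> Y \<omega>" and "0 < s"
  shows "((\<lambda>t. \<integral>\<omega>. Y \<omega> ^ n * exp (- t * Y \<omega>) \<partial>M) has_real_derivative
           - (\<integral>\<omega>. Y \<omega> ^ Suc n * exp (- s * Y \<omega>) \<partial>M)) (at s)"
proof -
  define C where "C = fact (Suc n) / (s/2) ^ Suc n"
  have "((\<lambda>t. \<integral>\<omega>. Y \<omega> ^ n * exp (- t * Y \<omega>) \<partial>M) has_real_derivative
          (\<integral>\<omega>. - (Y \<omega> ^ Suc n * exp (- s * Y \<omega>)) \<partial>M)) (at s)"
  proof (rule has_real_derivative_integral[where S="{s/2<..}" and w="\<lambda>_. C"])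
    show "AE \<omega> in M. \<forall>t\<in>{s/2<..}.
            ((\<lambda>t. Y \<omega> ^ n * exp (- t * Y \<omega>)) has_real_derivative - (Y \<omega> ^ Suc n * exp (- t * Y \<omega>))) (at t)
            \<and> \<bar>- (Y \<omega> ^ Suc n * exp (- t * Y \<omega>))\<bar> \<le> C"
      using Y_nonneg
    proof eventually_elim
      case (elim \<omega>)
      have "Y \<omega> ^ Suc n * exp (- t * Y \<omega>) \<le> C" if "s/2 < t" for t
      proof -
        have "Y \<omega> ^ Suc n * exp (- t * Y \<omega>) \<le> Y \<omega> ^ Suc n * exp (- (s/2 * Y \<omega>))"
          using that elim mult_right_mono[of "s/2" t "Y \<omega>"] by (intro mult_left_mono) auto
        also have "\<dots> \<le> C"
          unfolding C_def using elim \<open>0 < s\<close> by (intro power_mult_exp_le) auto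
        finally show ?thesis .
      qed
      then show ?case
        using elim by (auto intro!: derivative_eq_intros simp: algebra_simps)
    qed
  qed (use assms integrable_power_mult_exp in auto)
  then show ?thesis
    by simp
qed

lemma higher_deriv_laplace:
  fixes Y :: "'a \<Rightarrow> real"
  assumes "Y \<in> borel_measurable M" "AE \<omega> in M. 0 \<le> Y \<omega>" "0 < s"
  shows "(deriv ^^ i) (\<lambda>t. \<integral>\<omega>. exp (- t * Y \<omega>) \<partial>M) s
           = (-1) ^ i * (\<integral>\<omega>. Y \<omega> ^ i * exp (- s * Y \<omega>) \<partial>M)"
  using \<open>0 < s\<close>
proof (induction i arbitrary: s)
  case (Suc i)
  have "\<forall>\<^sub>F t in nhds s. (deriv ^^ i) (\<lambda>t. \<integral>\<omega>. exp (- t * Y \<omega>) \<partial>M) t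
          = (-1) ^ i * (\<integral>\<omega>. Y \<omega> ^ i * exp (- t * Y \<omega>) \<partial>M)"
    using eventually_nhds_in_open[of "{0<..}" s] Suc by (auto elim!: eventually_mono)
  then have "(deriv ^^ Suc i) (\<lambda>t. \<integral>\<omega>. exp (- t * Y \<omega>) \<partial>M) s
      = deriv (\<lambda>t. (-1) ^ i * (\<integral>\<omega>. Y \<omega> ^ i * exp (- t * Y \<omega>) \<partial>M)) s"
    by (simp add: deriv_cong_ev)
  also have "\<dots> = (-1) ^ i * - (\<integral>\<omega>. Y \<omega> ^ Suc i * exp (- s * Y \<omega>) \<partial>M)"
    by (intro DERIV_imp_deriv DERIV_cmult has_real_derivative_laplace_moment) (use assms Suc in auto)
  finally show ?case
    by simp
qed simp

lemma sum_higher_deriv_laplace: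
  fixes Y :: "'a \<Rightarrow> real" and F :: "real \<Rightarrow> real"
  assumes "Y \<in> borel_measurable M" "AE \<omega> in M. 0 \<le> Y \<omega>"
    and "\<forall>\<^sub>F s in nhds 1. F s = (\<integral>\<omega>. exp (- s * Y \<omega>) \<partial>M)"
  shows "(\<Sum>i<k. (-1) ^ i / fact i * (deriv ^^ i) F 1) = (\<Sum>n<k. (\<integral>\<omega>. Y \<omega> ^ n * exp (- Y \<omega>) \<partial>M) / fact n)"
proof (rule sum.cong)
  fix i
  have "(deriv ^^ i) F 1 = (deriv ^^ i) (\<lambda>s. \<integral>\<omega>. exp (- s * Y \<omega>) \<partial>M) 1"
    using assms(3) by (rule higher_deriv_cong_ev) simp
  also have "\<dots> = (-1) ^ i * (\<integral>\<omega>. Y \<omega> ^ i * exp (- Y \<omega>) \<partial>M)"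
    using higher_deriv_laplace[OF assms(1,2), of 1 i] by simp
  finally show "(-1) ^ i / fact i * (deriv ^^ i) F 1 = (\<integral>\<omega>. Y \<omega> ^ i * exp (- Y \<omega>) \<partial>M) / fact i"
    by (simp flip: power_mult_distrib)
qed simp

end

section \<open>The Gamma distribution\<close>

lemma borel_measurable_gamma_density [measurable]: "gamma_density k \<theta> \<in> borel_measurable borel"
  unfolding gamma_density_def by measurable

lemma sets_gamma_measure [simp, measurable_cong]: "sets (gamma_measure k \<theta>) = sets borel"
  by (simp add: gamma_measure_def)

lemma space_gamma_measure [simp]: "space (gamma_measure k \<theta>) = UNIV"
  by (simp add: gamma_measure_def)

lemma AE_gamma_measure_nonneg: "AE x in gamma_measure k \<theta>. 0 \<le> x"
  unfolding gamma_measure_def by (subst AE_density) (auto simp: gamma_density_def)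

lemma nn_integral_powr_mult_exp:
  fixes a b :: real
  assumes "0 < a" "0 < b"
  shows "(\<integral>\<^sup>+x. ennreal (if 0 < x then x powr (a - 1) * exp (- b * x) else 0) \<partial>lborel)
           = ennreal (Gamma a / b powr a)" (is "?I = _")
proof -
  define f where "f t = (if 0 < t then t powr (a - 1) * exp (- t) else 0)" for t :: real
  have "f = (\<lambda>t. if t \<in> {0..} then t powr (a - 1) / exp t else 0)"
    by (auto simp: f_def fun_eq_iff exp_minus field_simps)
  then have "(f has_integral Gamma a) UNIV"
    using Gamma_integral_real[OF \<open>0 < a\<close>] by (simp only: has_integral_restrict_UNIV)
  moreover have "f \<in> borel_measurable borel" "\<And>x. 0 \<le> f x"
    unfolding f_def by auto
  ultimately have "ennreal (Gamma a) = (\<integral>\<^sup>+x. f x \<partial>lborel)"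
    using nn_integral_has_integral_lborel by metis
  also have "\<dots> = ennreal b * (\<integral>\<^sup>+x. f (0 + b * x) \<partial>lborel)"
    using \<open>0 < b\<close> by (subst nn_integral_real_affine[where c=b and t=0]) (auto simp: f_def)
  also have "(\<integral>\<^sup>+x. f (0 + b * x) \<partial>lborel) = ennreal (b powr (a - 1)) *
      (\<integral>\<^sup>+x. ennreal (if 0 < x then x powr (a - 1) * exp (- b * x) else 0) \<partial>lborel)"
    using \<open>0 < b\<close>
    by (subst nn_integral_cmult[symmetric])
       (auto intro!: nn_integral_cong simp: f_def powr_mult zero_less_mult_iff ennreal_mult[symmetric])
  finally have Gamma_eq: "ennreal (Gamma a) = ennreal (b powr a) * ?I"
    using \<open>0 < b\<close> by (simp add: mult.assoc[symmetric] ennreal_mult'[symmetric] powr_diff)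
  have "ennreal (Gamma a / b powr a) = ennreal (1 / b powr a) * ennreal (Gamma a)"
    by (simp add: ennreal_mult'[symmetric])
  also have "\<dots> = ennreal (1 / b powr a * b powr a) * ?I"
    unfolding Gamma_eq by (subst ennreal_mult') (simp_all add: mult.assoc)
  finally show ?thesis
    using \<open>0 < b\<close> by simp
qed

lemma nn_integral_exp_gamma_measure:
  fixes k \<theta> u :: real
  assumes "0 < k" "0 < \<theta>" "0 < 1 + u * \<theta>"
  shows "(\<integral>\<^sup>+x. ennreal (exp (- u * x)) \<partial>gamma_measure k \<theta>) = ennreal ((1 + u * \<theta>) powr (- k))"
proof -
  have rate: "0 < 1 / \<theta> + u"
    using assms by (simp add: field_simps)
  have "(\<integral>\<^sup>+x. ennreal (exp (- u * x)) \<partial>gamma_measure k \<theta>) = (\<integral>\<^sup>+x. ennreal (1 / (Gamma k * \<theta> powr k)) *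
      ennreal (if 0 < x then x powr (k - 1) * exp (- (1 / \<theta> + u) * x) else 0) \<partial>lborel)"
    unfolding gamma_measure_def using assms
    by (subst nn_integral_density)
       (auto intro!: nn_integral_cong simp: gamma_density_def ennreal_mult[symmetric] exp_add[symmetric] field_simps)
  also have "\<dots> = ennreal (1 / (Gamma k * \<theta> powr k)) * ennreal (Gamma k / (1 / \<theta> + u) powr k)"
    using assms rate by (simp add: nn_integral_cmult nn_integral_powr_mult_exp)
  also have "\<dots> = ennreal ((1 + u * \<theta>) powr (- k))"
  proof -
    have "\<theta> powr k * (1 / \<theta> + u) powr k = (\<theta> * (1 / \<theta> + u)) powr k"
      using assms rate by (simp add: powr_mult)
    also have "\<theta> * (1 / \<theta> + u) = 1 + u * \<theta>"
      using assms by (simp add: field_simps)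
    finally have "\<theta> powr k * (1 / \<theta> + u) powr k = (1 + u * \<theta>) powr k" .
    moreover have "Gamma k \<noteq> 0"
      using Gamma_real_pos[OF \<open>0 < k\<close>] by simp
    ultimately show ?thesis
      using assms by (simp add: ennreal_mult'[symmetric] powr_minus_divide)
  qed
  finally show ?thesis .
qed

lemma prob_space_gamma_measure: "0 < k \<Longrightarrow> 0 < \<theta> \<Longrightarrow> prob_space (gamma_measure k \<theta>)"
  using nn_integral_exp_gamma_measure[of k \<theta> 0]
  by (intro prob_spaceI) (simp add: gamma_measure_def emeasure_density)

lemma integral_exp_gamma_measure:
  fixes k \<theta> u :: real
  assumes "0 < k" "0 < \<theta>" "0 < 1 + u * \<theta>"
  shows "(\<integral>x. exp (- u * x) \<partial>gamma_measure k \<theta>) = (1 + u * \<theta>) powr (- k)"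
  using nn_integral_exp_gamma_measure[OF assms]
  by (intro has_bochner_integral_integral_eq has_bochner_integral_nn_integral) auto

lemma gamma_measure_of_nat_eq_erlang:
  fixes \<theta> :: real
  assumes "0 < k" "0 < \<theta>"
  shows "gamma_measure (real k) \<theta> = density lborel (erlang_density (k - 1) (1 / \<theta>))"
  unfolding gamma_measure_def
proof (rule density_cong)
  obtain m where k: "k = Suc m"
    using \<open>0 < k\<close> by (cases k) auto
  have "gamma_density (real k) \<theta> x = erlang_density (k - 1) (1 / \<theta>) x" if "x \<noteq> 0" for x
    using that \<open>0 < \<theta>\<close> Gamma_fact[of m] powr_realpow[of \<theta> "Suc m"] powr_realpow[of x m]
    by (auto simp: gamma_density_def erlang_density_def k field_simps power_divide)
  with AE_lborel_singleton[of 0]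
  show "AE x in lborel. ennreal (gamma_density (real k) \<theta> x) = ennreal (erlang_density (k - 1) (1 / \<theta>) x)"
    by (auto elim!: eventually_mono)
qed auto

lemma emeasure_gamma_measure_greaterThan:
  fixes \<theta> a :: real
  assumes "0 < k" "0 < \<theta>" "0 \<le> a"
  shows "emeasure (gamma_measure (real k) \<theta>) {a<..} = ennreal (\<Sum>n<k. (a / \<theta>) ^ n * exp (- a / \<theta>) / fact n)"
proof -
  interpret prob_space "gamma_measure (real k) \<theta>"
    using assms by (intro prob_space_gamma_measure) auto
  have "prob {..a} = erlang_CDF (k - 1) (1 / \<theta>) a"
    using assms erlang_CDF_nonneg
    by (simp add: measure_def gamma_measure_of_nat_eq_erlang emeasure_erlang_density)
  moreover have "{..k - 1} = {..<k}"
    using \<open>0 < k\<close> by auto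
  ultimately have "prob {a<..} = (\<Sum>n<k. (a / \<theta>) ^ n * exp (- a / \<theta>) / fact n)"
    using prob_compl[of "{..a}"] assms by (simp add: erlang_CDF_def Diff_eq Compl_atMost)
  then show ?thesis
    by (simp add: emeasure_eq_measure)
qed

section \<open>Independent random variables\<close>

context prob_space
begin

lemma emeasure_less_indep_var:
  fixes S X :: "'a \<Rightarrow> real"
  assumes indep: "indep_var borel S borel X"
  shows "emeasure M {\<omega> \<in> space M. X \<omega> < S \<omega>} = (\<integral>\<^sup>+x. emeasure (distr M borel S) {x<..} \<partial>distr M borel X)"
proof -
  have [measurable]: "S \<in> borel_measurable M" "X \<in> borel_measurable M"
    using indep_var_rv1[OF indep] indep_var_rv2[OF indep] by auto
  define A where "A = {p \<in> space (borel \<Otimes>\<^sub>M borel). snd p < (fst p :: real)}"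
  have A_sets: "A \<in> sets (borel \<Otimes>\<^sub>M borel)"
    unfolding A_def by measurable
  interpret S: prob_space "distr M borel S"
    by (rule prob_space_distr) simp
  interpret X: prob_space "distr M borel X"
    by (rule prob_space_distr) simp
  interpret pair_sigma_finite "distr M borel S" "distr M borel X" ..
  have "emeasure M {\<omega> \<in> space M. X \<omega> < S \<omega>} = emeasure (distr M (borel \<Otimes>\<^sub>M borel) (\<lambda>\<omega>. (S \<omega>, X \<omega>))) A"
    by (subst emeasure_distr[OF _ A_sets], measurable)
       (auto simp: A_def space_pair_measure intro!: arg_cong[where f="emeasure M"])
  also have "\<dots> = emeasure (distr M borel S \<Otimes>\<^sub>M distr M borel X) A"
    using indep by (simp add: indep_var_distribution_eq)
  also have "\<dots> = (\<integral>\<^sup>+x. emeasure (distr M borel S) ((\<lambda>s. (s, x)) -` A) \<partial>distr M borel X)"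
    by (rule emeasure_pair_measure_alt2) (simp add: A_sets)
  finally show ?thesis
    by (simp add: A_def greaterThan_def space_pair_measure)
qed

lemma prob_gamma_greater_indep_var:
  fixes S X :: "'a \<Rightarrow> real" and \<theta> :: real
  assumes indep: "indep_var borel S borel X" and S: "distr M borel S = gamma_measure (real k) \<theta>"
    and "0 < k" "0 < \<theta>" and X_nonneg: "AE \<omega> in M. 0 \<le> X \<omega>"
  shows "prob {\<omega> \<in> space M. X \<omega> < S \<omega>}
           = (\<Sum>n<k. (\<integral>\<omega>. (X \<omega> / \<theta>) ^ n * exp (- (X \<omega> / \<theta>)) \<partial>M) / fact n)"
proof -
  have [measurable]: "X \<in> borel_measurable M"
    using indep_var_rv2[OF indep] by simp
  define tail where "tail y = (\<Sum>n<k. (y / \<theta>) ^ n * exp (- (y / \<theta>)) / fact n)" for y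
  have Y_nonneg: "AE \<omega> in M. 0 \<le> X \<omega> / \<theta>"
    using X_nonneg by eventually_elim (use \<open>0 < \<theta>\<close> in simp)
  have int: "integrable M (\<lambda>\<omega>. (X \<omega> / \<theta>) ^ n * exp (- (X \<omega> / \<theta>)))" for n
    using integrable_power_mult_exp[of "\<lambda>\<omega>. X \<omega> / \<theta>" 1 n] Y_nonneg by simp
  have "emeasure M {\<omega> \<in> space M. X \<omega> < S \<omega>} = (\<integral>\<^sup>+x. emeasure (gamma_measure (real k) \<theta>) {x<..} \<partial>distr M borel X)"
    using indep by (simp add: emeasure_less_indep_var S)
  also have "\<dots> = (\<integral>\<^sup>+x. ennreal (tail x) \<partial>distr M borel X)"
  proof (rule nn_integral_cong_AE)
    have "AE x in distr M borel X. 0 \<le> x"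
      using X_nonneg by (subst AE_distr_iff) auto
    then show "AE x in distr M borel X. emeasure (gamma_measure (real k) \<theta>) {x<..} = ennreal (tail x)"
      by eventually_elim (simp add: emeasure_gamma_measure_greaterThan \<open>0 < k\<close> \<open>0 < \<theta>\<close> tail_def)
  qed
  also have "\<dots> = (\<integral>\<^sup>+\<omega>. ennreal (tail (X \<omega>)) \<partial>M)"
    unfolding tail_def by (simp add: nn_integral_distr)
  also have "\<dots> = ennreal (\<integral>\<omega>. tail (X \<omega>) \<partial>M)"
    using Y_nonneg unfolding tail_def
    by (intro nn_integral_eq_integral Bochner_Integration.integrable_sum integrable_divide int)
       (auto elim!: eventually_mono intro!: sum_nonneg)
  finally have "prob {\<omega> \<in> space M. X \<omega> < S \<omega>} = (\<integral>\<omega>. tail (X \<omega>) \<partial>M)"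
    using Y_nonneg unfolding tail_def
    by (simp add: emeasure_eq_measure integral_nonneg_AE eventually_mono sum_nonneg)
  also have "\<dots> = (\<Sum>n<k. (\<integral>\<omega>. (X \<omega> / \<theta>) ^ n * exp (- (X \<omega> / \<theta>)) \<partial>M) / fact n)"
    unfolding tail_def by (subst Bochner_Integration.integral_sum) (auto intro: integrable_divide int)
  finally show ?thesis .
qed

lemma prob_gamma_greater_higher_deriv_laplace:
  fixes S Z :: "'a \<Rightarrow> real" and F :: "real \<Rightarrow> real" and \<theta> :: real
  assumes "indep_var borel S borel Z" "distr M borel S = gamma_measure (real k) \<theta>"
    and "0 < k" "0 < \<theta>" "AE \<omega> in M. 0 \<le> Z \<omega>"
    and "\<forall>\<^sub>F s in nhds 1. F s = (\<integral>\<omega>. exp (- s * (Z \<omega> / \<theta>)) \<partial>M)"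
  shows "prob {\<omega> \<in> space M. Z \<omega> < S \<omega>} = (\<Sum>i<k. (-1) ^ i / fact i * (deriv ^^ i) F 1)"
proof -
  have "random_variable borel Z"
    using indep_var_rv2[OF assms(1)] .
  moreover have "AE \<omega> in M. 0 \<le> Z \<omega> / \<theta>"
    using assms(5) by eventually_elim (use \<open>0 < \<theta>\<close> in simp)
  ultimately show ?thesis
    using prob_gamma_greater_indep_var[OF assms(1-5)] sum_higher_deriv_laplace[OF _ _ assms(6)] by simp
qed

lemma integral_exp_sum_indep_vars:
  fixes X :: "'i \<Rightarrow> 'a \<Rightarrow> real"
  assumes "finite I" and indep: "indep_vars (\<lambda>_. borel) X I"
    and nonneg: "\<And>i. i \<in> I \<Longrightarrow> AE \<omega> in M. 0 \<le> X i \<omega>" and "0 \<le> u"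
  shows "(\<integral>\<omega>. exp (- u * (\<Sum>i\<in>I. X i \<omega>)) \<partial>M) = (\<Prod>i\<in>I. \<integral>x. exp (- u * x) \<partial>distr M borel (X i))"
proof -
  have [measurable]: "X i \<in> borel_measurable M" if "i \<in> I" for i
    using indep that by (simp add: indep_vars_def)
  have "(\<integral>\<omega>. exp (- u * (\<Sum>i\<in>I. X i \<omega>)) \<partial>M) = (\<integral>\<omega>. (\<Prod>i\<in>I. exp (- u * X i \<omega>)) \<partial>M)"
    by (simp add: exp_sum sum_distrib_left \<open>finite I\<close>)
  also have "\<dots> = (\<Prod>i\<in>I. \<integral>\<omega>. exp (- u * X i \<omega>) \<partial>M)"
  proof (rule indep_vars_lebesgue_integral)
    show "indep_vars (\<lambda>_. borel) (\<lambda>i \<omega>. exp (- u * X i \<omega>)) I"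
      by (rule indep_vars_compose2[OF indep]) simp
    show "integrable M (\<lambda>\<omega>. exp (- u * X i \<omega>))" if "i \<in> I" for i
      using nonneg[OF that] \<open>0 \<le> u\<close> that
      by (intro integrable_const_bound[where B=1]) (auto elim!: eventually_mono)
  qed fact
  also have "\<dots> = (\<Prod>i\<in>I. \<integral>x. exp (- u * x) \<partial>distr M borel (X i))"
    by (intro prod.cong refl integral_distr[symmetric]) auto
  finally show ?thesis .
qed

end

section \<open>Radial integration over an annulus\<close>

lemma annulus_sets [measurable]: "annulus r1 r2 \<in> sets borel"
  unfolding annulus_def by measurable

lemma emeasure_cball_Diff:
  fixes T :: "(real^2) set"
  assumes "0 \<le> r" "r \<le> R" "ball 0 r \<subseteq> T" "T \<subseteq> cball 0 r" "T \<in> sets lborel"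
  shows "emeasure lborel (cball 0 R - T) = ennreal (pi * (R^2 - r^2))"
proof -
  have area: "emeasure lborel (ball (0::real^2) \<rho>) = ennreal (pi * \<rho>^2)"
    "emeasure lborel (cball (0::real^2) \<rho>) = ennreal (pi * \<rho>^2)" if "0 \<le> \<rho>" for \<rho>
    using that emeasure_ball[of \<rho> "0::real^2"] emeasure_cball[of \<rho> "0::real^2"]
    by (simp_all add: unit_ball_vol_2 mult.commute)
  have "emeasure lborel (ball (0::real^2) r) \<le> emeasure lborel T"
    by (rule emeasure_mono[OF assms(3,5)])
  moreover have "emeasure lborel T \<le> emeasure lborel (cball (0::real^2) r)"
    by (rule emeasure_mono[OF assms(4)]) simp
  ultimately have "emeasure lborel T = ennreal (pi * r^2)"
    using area \<open>0 \<le> r\<close> by (intro antisym) auto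
  moreover have "T \<subseteq> cball 0 R"
    using assms by auto
  ultimately show ?thesis
    using assms area[of R] by (subst emeasure_Diff) (auto simp: ennreal_minus algebra_simps)
qed

lemma emeasure_annulus:
  assumes "0 \<le> r1" "r1 \<le> r2"
  shows "emeasure lborel (annulus r1 r2) = ennreal (pi * (r2^2 - r1^2))"
proof -
  have "annulus r1 r2 = cball 0 r2 - ball 0 r1"
    by (auto simp: annulus_def)
  then show ?thesis
    using assms by (simp add: emeasure_cball_Diff)
qed

lemma measure_annulus:
  assumes "0 \<le> r1" "r1 \<le> r2"
  shows "measure lborel (annulus r1 r2) = pi * (r2^2 - r1^2)"
  using emeasure_annulus[OF assms] assms by (simp add: measure_def power_mono)

lemma emeasure_annulus_norm_greater:
  assumes "0 \<le> d" "d \<le> R"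
  shows "emeasure lborel (annulus d R \<inter> {v. x < norm v}) = ennreal (pi * (R^2 - (min R (max d x))^2))"
proof (cases "x < d")
  case True
  then have "annulus d R \<inter> {v. x < norm v} = annulus d R"
    by (auto simp: annulus_def)
  then show ?thesis
    using True assms by (simp add: emeasure_annulus)
next
  case False
  then have "annulus d R \<inter> {v. x < norm v} = cball 0 R - cball 0 (min R x)"
    by (auto simp: annulus_def)
  then show ?thesis
    using False assms by (simp add: emeasure_cball_Diff)
qed

lemma nn_integral_indicator_interval_continuous:
  fixes g :: "real \<Rightarrow> real"
  assumes "a \<le> b" "continuous_on {a..b} g" "\<And>x. x \<in> {a..b} \<Longrightarrow> 0 \<le> g x"
  shows "(\<integral>\<^sup>+x. ennreal (indicator {a..b} x * g x) \<partial>lborel) = ennreal (integral {a..b} g)"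
proof (rule nn_integral_has_integral_lborel)
  show "(\<lambda>x. indicator {a..b} x * g x) \<in> borel_measurable borel"
    using borel_measurable_continuous_on_indicator[of "{a..b}" g] assms(2) by simp
  show "0 \<le> indicator {a..b} x * g x" for x
    using assms(3) by (simp split: split_indicator)
  have "(g has_integral integral {a..b} g) {a..b}"
    using integrable_continuous_interval[OF assms(2)] by (rule integrable_integral)
  moreover have "(\<lambda>x. indicator {a..b} x * g x) = (\<lambda>x. if x \<in> {a..b} then g x else 0)"
    by (auto simp: indicator_def fun_eq_iff)
  ultimately show "((\<lambda>x. indicator {a..b} x * g x) has_integral integral {a..b} g) UNIV"
    by (simp only: has_integral_restrict_UNIV)
qed

lemma integral_two_pi_r:
  fixes a b :: real
  assumes "a \<le> b"
  shows "integral {a..b} (\<lambda>r. 2 * pi * r) = pi * (b^2 - a^2)"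
proof -
  have "((\<lambda>r. 2 * pi * r) has_integral ((\<lambda>r. pi * r^2) b - (\<lambda>r. pi * r^2) a)) {a..b}"
    by (rule fundamental_theorem_of_calculus[OF assms])
       (auto intro!: derivative_eq_intros simp: has_real_derivative_iff_has_vector_derivative[symmetric])
  then have "integral {a..b} (\<lambda>r. 2 * pi * r) = pi * b^2 - pi * a^2"
    by (rule integral_unique)
  then show ?thesis
    by (simp add: right_diff_distrib)
qed

lemma integral_two_pi_r_mult_diff_area:
  fixes h :: "real \<Rightarrow> real"
  assumes "a \<le> b" "continuous_on {a..b} h"
  shows "integral {a..b} (\<lambda>r. 2 * pi * r * h r) - pi * (b^2 - a^2) = 2 * pi * integral {a..b} (\<lambda>r. (h r - 1) * r)"
proof -
  have "integral {a..b} (\<lambda>r. 2 * pi * r * h r) - pi * (b^2 - a^2)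
      = integral {a..b} (\<lambda>r. 2 * pi * r * h r - 2 * pi * r)"
    using assms by (simp add: integral_two_pi_r integral_diff integrable_continuous_interval continuous_intros)
  also have "(\<lambda>r. 2 * pi * r * h r - 2 * pi * r) = (\<lambda>r. 2 * pi * ((h r - 1) * r))"
    by (auto simp: algebra_simps)
  finally show ?thesis
    by simp
qed

lemma distr_norm_annulus:
  fixes d R :: real
  assumes "0 \<le> d" "d \<le> R"
  shows "distr (density (lborel :: (real^2) measure) (indicator (annulus d R))) borel norm
           = density lborel (\<lambda>r. ennreal (indicator {d..R} r * (2 * pi * r)))"
proof (rule measure_eqI_lessThan)
  fix x :: real
  define lo where "lo = min R (max d x)"
  have lo: "d \<le> lo" "lo \<le> R"
    using assms by (auto simp: lo_def)
  have lhs: "emeasure (distr (density lborel (indicator (annulus d R))) borel norm) {x<..}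
      = ennreal (pi * (R^2 - lo^2))"
    using emeasure_annulus_norm_greater[OF assms, of x]
    by (simp add: emeasure_distr emeasure_restricted Int_commute vimage_def lo_def)
  then show "emeasure (distr (density lborel (indicator (annulus d R))) borel norm) {x<..} < \<infinity>"
    by simp
  have "emeasure (density lborel (\<lambda>r. ennreal (indicator {d..R} r * (2 * pi * r)))) {x<..}
      = (\<integral>\<^sup>+r. ennreal (indicator {lo..R} r * (2 * pi * r)) \<partial>lborel)"
    using AE_lborel_singleton[of lo]
    by (subst emeasure_density)
       (auto intro!: nn_integral_cong_AE elim!: eventually_mono simp: lo_def indicator_def max_def min_def)
  also have "\<dots> = ennreal (pi * (R^2 - lo^2))"
    using lo assms
    by (subst nn_integral_indicator_interval_continuous) (auto intro!: continuous_intros simp: integral_two_pi_r)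
  finally show "emeasure (distr (density lborel (indicator (annulus d R))) borel norm) {x<..}
      = emeasure (density lborel (\<lambda>r. ennreal (indicator {d..R} r * (2 * pi * r)))) {x<..}"
    using lhs by simp
qed auto

lemma nn_integral_annulus_radial:
  fixes d R :: real and h :: "real \<Rightarrow> real"
  assumes "0 \<le> d" "d \<le> R" "continuous_on {d..R} h" "\<And>r. r \<in> {d..R} \<Longrightarrow> 0 \<le> h r"
    and [measurable]: "h \<in> borel_measurable borel"
  shows "(\<integral>\<^sup>+v. ennreal (h (norm v)) * indicator (annulus d R) v \<partial>(lborel :: (real^2) measure))
           = ennreal (integral {d..R} (\<lambda>r. 2 * pi * r * h r))"
proof -
  have "(\<integral>\<^sup>+v. ennreal (h (norm v)) * indicator (annulus d R) v \<partial>(lborel :: (real^2) measure))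
      = (\<integral>\<^sup>+r. ennreal (h r) \<partial>distr (density lborel (indicator (annulus d R))) borel norm)"
    by (simp add: nn_integral_distr nn_integral_density mult.commute)
  also have "\<dots> = (\<integral>\<^sup>+r. ennreal (indicator {d..R} r * (2 * pi * r * h r)) \<partial>lborel)"
    using assms(1,2,4)
    by (simp add: distr_norm_annulus nn_integral_density)
       (auto intro!: nn_integral_cong simp: indicator_def ennreal_mult[symmetric] mult.assoc)
  also have "\<dots> = ennreal (integral {d..R} (\<lambda>r. 2 * pi * r * h r))"
    using assms by (intro nn_integral_indicator_interval_continuous) (auto intro!: continuous_intros)
  finally show ?thesis .
qed

section \<open>The marked Poisson point process\<close>

definition ppp_mark_measure :: "real \<Rightarrow> real \<Rightarrow> real \<Rightarrow> ((real^2) \<times> real) measure" where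
  "ppp_mark_measure r1 r2 phi = uniform_measure lborel (annulus r1 r2) \<Otimes>\<^sub>M gamma_measure phi 1"

definition ppp_interference_sum ::
  "real \<Rightarrow> real \<Rightarrow> real \<Rightarrow> nat \<Rightarrow> (nat \<Rightarrow> (real^2) \<times> real) \<Rightarrow> real" where
  "ppp_interference_sum rho beta0 alpha n \<omega> =
     rho * (\<Sum>i<n. beta0 * norm (fst (\<omega> i)) powr (- alpha) * snd (\<omega> i))"

lemma measurable_ppp_interference_sum [measurable]:
  "ppp_interference_sum rho beta0 alpha n \<in> borel_measurable (PiM {..<n} (\<lambda>_. ppp_mark_measure r1 r2 phi))"
  unfolding ppp_interference_sum_def ppp_mark_measure_def by measurable

lemma ppp_interference_eq_bind:
  "ppp_interference lam r1 r2 rho beta0 alpha phi =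
     measure_pmf (poisson_pmf (lam * measure lborel (annulus r1 r2))) \<bind>
       (\<lambda>n. distr (PiM {..<n} (\<lambda>_. ppp_mark_measure r1 r2 phi)) borel (ppp_interference_sum rho beta0 alpha n))"
  unfolding ppp_interference_def ppp_mark_measure_def ppp_interference_sum_def ..

lemma prob_space_uniform_annulus:
  "0 \<le> d \<Longrightarrow> d < R \<Longrightarrow> prob_space (uniform_measure lborel (annulus d R))"
  by (intro prob_space_uniform_measure) (auto simp: emeasure_annulus power_strict_mono)

lemma prob_space_ppp_mark_measure:
  assumes "0 \<le> d" "d < R" "0 < phi"
  shows "prob_space (ppp_mark_measure d R phi)"
proof -
  interpret U: prob_space "uniform_measure lborel (annulus d R)"
    by (rule prob_space_uniform_annulus[OF assms(1,2)])
  interpret K: prob_space "gamma_measure phi 1"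
    using assms by (intro prob_space_gamma_measure) auto
  interpret pair_prob_space "uniform_measure lborel (annulus d R)" "gamma_measure phi 1" ..
  show ?thesis
    unfolding ppp_mark_measure_def by (rule prob_space_axioms)
qed

lemma ppp_interference_kernel:
  assumes "0 \<le> d" "d < R" "0 < phi"
  shows "distr (PiM {..<n} (\<lambda>_. ppp_mark_measure d R phi)) borel (ppp_interference_sum rho beta0 alpha n)
           \<in> space (subprob_algebra borel)"
proof -
  interpret Q: prob_space "ppp_mark_measure d R phi"
    using assms by (rule prob_space_ppp_mark_measure)
  interpret P: prob_space "PiM {..<n} (\<lambda>_. ppp_mark_measure d R phi)"
    by (intro prob_space_PiM Q.prob_space_axioms)
  show ?thesis
    by (auto simp: space_subprob_algebra intro!: prob_space_imp_subprob_space P.prob_space_distr)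
qed

lemma AE_ppp_interference_nonneg:
  assumes "0 \<le> d" "d < R" "0 < phi" "0 \<le> rho" "0 \<le> beta0"
  shows "AE x in ppp_interference lam d R rho beta0 alpha phi. 0 \<le> x"
  unfolding ppp_interference_eq_bind
proof (subst AE_bind[where B=borel])
  interpret Q: prob_space "ppp_mark_measure d R phi"
    using assms by (intro prob_space_ppp_mark_measure)
  interpret U: prob_space "uniform_measure lborel (annulus d R)"
    by (rule prob_space_uniform_annulus[OF assms(1,2)])
  interpret K: prob_space "gamma_measure phi 1"
    using assms by (intro prob_space_gamma_measure) auto
  interpret pair_sigma_finite "uniform_measure lborel (annulus d R)" "gamma_measure phi 1" ..
  have "AE q in ppp_mark_measure d R phi. 0 \<le> snd q"
    unfolding ppp_mark_measure_def
  proof (rule AE_pair_measure)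
    show "AE x in uniform_measure lborel (annulus d R). AE y in gamma_measure phi 1. 0 \<le> snd (x, y)"
      using AE_gamma_measure_nonneg[of phi 1] by simp
  qed measurable
  then have snd_nonneg: "AE \<omega> in PiM {..<n} (\<lambda>_. ppp_mark_measure d R phi). \<forall>i\<in>{..<n}. 0 \<le> snd (\<omega> i)"
    for n :: nat
    by (intro eventually_ball_finite ballI AE_PiM_component Q.prob_space_axioms) auto
  have sum_nonneg: "AE \<omega> in PiM {..<n} (\<lambda>_. ppp_mark_measure d R phi). 0 \<le> ppp_interference_sum rho beta0 alpha n \<omega>"
    for n :: nat
    using snd_nonneg[of n]
    by eventually_elim (use assms in \<open>auto simp: ppp_interference_sum_def intro!: mult_nonneg_nonneg sum_nonneg\<close>)
  show "AE n in measure_pmf (poisson_pmf (lam * measure lborel (annulus d R))).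
      AE x in distr (PiM {..<n} (\<lambda>_. ppp_mark_measure d R phi)) borel (ppp_interference_sum rho beta0 alpha n). 0 \<le> x"
  proof (rule AE_I2)
    fix n :: nat
    show "AE x in distr (PiM {..<n} (\<lambda>_. ppp_mark_measure d R phi)) borel (ppp_interference_sum rho beta0 alpha n). 0 \<le> x"
      using sum_nonneg[of n] by (subst AE_distr_iff) auto
  qed
qed (use ppp_interference_kernel[OF assms(1-3)] in auto)

lemma nn_integral_exp_ppp_interference_sum:
  assumes "0 \<le> d" "d < R" "0 < phi"
  shows "(\<integral>\<^sup>+x. ennreal (exp (- u * x))
            \<partial>distr (PiM {..<n} (\<lambda>_. ppp_mark_measure d R phi)) borel (ppp_interference_sum rho beta0 alpha n))
         = (\<integral>\<^sup>+q. ennreal (exp (- (u * rho * beta0 * norm (fst q) powr (- alpha)) * snd q))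
              \<partial>ppp_mark_measure d R phi) ^ n"
proof -
  interpret Q: prob_space "ppp_mark_measure d R phi"
    using assms by (rule prob_space_ppp_mark_measure)
  interpret product_sigma_finite "\<lambda>_::nat. ppp_mark_measure d R phi"
    unfolding product_sigma_finite_def using Q.sigma_finite_measure_axioms by blast
  have "exp (- u * ppp_interference_sum rho beta0 alpha n \<omega>)
      = (\<Prod>i<n. exp (- (u * rho * beta0 * norm (fst (\<omega> i)) powr (- alpha)) * snd (\<omega> i)))" for \<omega>
    unfolding ppp_interference_sum_def
    by (simp add: exp_sum[symmetric] sum_distrib_left sum_negf mult.assoc)
  then have "(\<integral>\<^sup>+x. ennreal (exp (- u * x))
        \<partial>distr (PiM {..<n} (\<lambda>_. ppp_mark_measure d R phi)) borel (ppp_interference_sum rho beta0 alpha n))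
      = (\<integral>\<^sup>+\<omega>. (\<Prod>i<n. ennreal (exp (- (u * rho * beta0 * norm (fst (\<omega> i)) powr (- alpha)) * snd (\<omega> i))))
          \<partial>PiM {..<n} (\<lambda>_. ppp_mark_measure d R phi))"
    by (simp add: nn_integral_distr prod_ennreal)
  also have "\<dots> = (\<Prod>i<n. \<integral>\<^sup>+q. ennreal (exp (- (u * rho * beta0 * norm (fst q) powr (- alpha)) * snd q))
                        \<partial>ppp_mark_measure d R phi)"
    by (rule product_nn_integral_prod) (auto simp: ppp_mark_measure_def)
  finally show ?thesis
    by simp
qed

lemma continuous_on_powr_one_plus_powr:
  fixes c d :: real
  assumes "0 \<le> c" "0 < d"
  shows "continuous_on {d..R} (\<lambda>r. (1 + c * r powr (- alpha)) powr (- phi))"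
proof -
  have "1 + c * r powr (- alpha) \<noteq> 0" for r
    using assms by (simp add: add_pos_nonneg order.strict_implies_not_eq[symmetric])
  then show ?thesis
    using assms by (intro continuous_intros) auto
qed

lemma nn_integral_exp_ppp_mark_measure:
  fixes c :: real
  assumes "0 < d" "d < R" "0 < phi" "0 \<le> c"
  shows "(\<integral>\<^sup>+q. ennreal (exp (- (c * norm (fst q) powr (- alpha)) * snd q)) \<partial>ppp_mark_measure d R phi)
           = ennreal (integral {d..R} (\<lambda>r. 2 * pi * r * (1 + c * r powr (- alpha)) powr (- phi))
                       / (pi * (R^2 - d^2)))"
proof -
  interpret K: prob_space "gamma_measure phi 1"
    using assms by (intro prob_space_gamma_measure) auto
  define h where "h r = (1 + c * r powr (- alpha)) powr (- phi)" for r
  have h_cont: "continuous_on {d..R} h"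
    unfolding h_def using assms by (intro continuous_on_powr_one_plus_powr)
  have h_meas [measurable]: "h \<in> borel_measurable borel"
    unfolding h_def by measurable
  have "(\<integral>\<^sup>+q. ennreal (exp (- (c * norm (fst q) powr (- alpha)) * snd q)) \<partial>ppp_mark_measure d R phi)
      = (\<integral>\<^sup>+v. \<integral>\<^sup>+y. ennreal (exp (- (c * norm v powr (- alpha)) * y)) \<partial>gamma_measure phi 1
           \<partial>uniform_measure lborel (annulus d R))"
    unfolding ppp_mark_measure_def by (subst K.nn_integral_fst[symmetric]) auto
  also have "\<dots> = (\<integral>\<^sup>+v. ennreal (h (norm v)) \<partial>uniform_measure lborel (annulus d R))"
  proof (intro nn_integral_cong)
    fix v :: "real^2"
    show "(\<integral>\<^sup>+y. ennreal (exp (- (c * norm v powr (- alpha)) * y)) \<partial>gamma_measure phi 1) = ennreal (h (norm v))"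
      using nn_integral_exp_gamma_measure[of phi 1 "c * norm v powr (- alpha)"] assms
      by (simp add: h_def add_pos_nonneg)
  qed
  also have "\<dots> = (\<integral>\<^sup>+v. ennreal (h (norm v)) * indicator (annulus d R) v \<partial>lborel) / emeasure lborel (annulus d R)"
    by (rule nn_integral_uniform_measure) auto
  also have "\<dots> = ennreal (integral {d..R} (\<lambda>r. 2 * pi * r * h r)) / ennreal (pi * (R^2 - d^2))"
    using assms by (subst nn_integral_annulus_radial[OF _ _ h_cont _ h_meas]) (auto simp: emeasure_annulus h_def)
  also have "\<dots> = ennreal (integral {d..R} (\<lambda>r. 2 * pi * r * h r) / (pi * (R^2 - d^2)))"
  proof (rule divide_ennreal)
    show "0 \<le> integral {d..R} (\<lambda>r. 2 * pi * r * h r)"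
      using assms h_cont
      by (intro integral_nonneg integrable_continuous_interval continuous_intros) (auto simp: h_def)
    show "0 < pi * (R^2 - d^2)"
      using assms by (simp add: power_strict_mono)
  qed
  finally show ?thesis
    unfolding h_def .
qed

lemma nn_integral_poisson_pmf_power:
  fixes \<mu> q :: real
  assumes "0 < \<mu>" "0 \<le> q"
  shows "(\<integral>\<^sup>+n. ennreal q ^ n \<partial>measure_pmf (poisson_pmf \<mu>)) = ennreal (exp (\<mu> * (q - 1)))"
proof -
  have series: "(\<lambda>n. exp (- \<mu>) * ((\<mu> * q) ^ n / fact n)) sums (exp (- \<mu>) * exp (\<mu> * q))"
    using exp_converges[of "\<mu> * q"] by (intro sums_mult) (simp add: divide_inverse_commute)
  have "ennreal (pmf (poisson_pmf \<mu>) n) * ennreal q ^ n = ennreal (exp (- \<mu>) * ((\<mu> * q) ^ n / fact n))" for n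
  proof -
    have "ennreal (pmf (poisson_pmf \<mu>) n) * ennreal q ^ n = ennreal (pmf (poisson_pmf \<mu>) n * q ^ n)"
      using assms by (simp add: ennreal_power ennreal_mult'[symmetric])
    then show ?thesis
      using assms by (simp add: power_mult_distrib)
  qed
  then have "(\<integral>\<^sup>+n. ennreal q ^ n \<partial>measure_pmf (poisson_pmf \<mu>)) = (\<Sum>n. ennreal (exp (- \<mu>) * ((\<mu> * q) ^ n / fact n)))"
    by (simp add: nn_integral_measure_pmf nn_integral_count_space_nat)
  also have "\<dots> = ennreal (exp (- \<mu>) * exp (\<mu> * q))"
    using series assms by (subst suminf_ennreal2) (auto simp: sums_iff)
  finally show ?thesis
    by (simp add: exp_add[symmetric] algebra_simps)
qed

lemma nn_integral_exp_ppp_interference: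
  fixes d R lam rho beta0 alpha phi u :: real
  assumes "0 < d" "d < R" "0 < phi" "0 < lam" "0 \<le> rho" "0 \<le> beta0" "0 \<le> u"
  shows "(\<integral>\<^sup>+x. ennreal (exp (- u * x)) \<partial>ppp_interference lam d R rho beta0 alpha phi)
           = ennreal (exp (2 * pi * lam *
               integral {d..R} (\<lambda>r. ((1 + u * rho * beta0 * r powr (- alpha)) powr (- phi) - 1) * r)))"
proof -
  define h where "h r = (1 + u * rho * beta0 * r powr (- alpha)) powr (- phi)" for r
  define m where "m = pi * (R^2 - d^2)"
  define q where "q = integral {d..R} (\<lambda>r. 2 * pi * r * h r) / m"
  have m: "0 < m"
    unfolding m_def using assms by (simp add: power_strict_mono)
  have h_cont: "continuous_on {d..R} h"
    unfolding h_def using assms by (intro continuous_on_powr_one_plus_powr) auto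
  have q: "0 \<le> q"
    unfolding q_def using m assms h_cont
    by (intro divide_nonneg_pos integral_nonneg integrable_continuous_interval continuous_intros)
       (auto simp: h_def)
  have kernel: "(\<lambda>n. distr (PiM {..<n} (\<lambda>_. ppp_mark_measure d R phi)) borel (ppp_interference_sum rho beta0 alpha n))
      \<in> measurable (measure_pmf p) (subprob_algebra borel)" for p
    using ppp_interference_kernel assms by simp
  have rate: "lam * measure lborel (annulus d R) = lam * m"
    unfolding m_def using assms by (simp add: measure_annulus)
  have "(\<integral>\<^sup>+x. ennreal (exp (- u * x)) \<partial>ppp_interference lam d R rho beta0 alpha phi)
      = (\<integral>\<^sup>+n. \<integral>\<^sup>+x. ennreal (exp (- u * x))
           \<partial>distr (PiM {..<n} (\<lambda>_. ppp_mark_measure d R phi)) borel (ppp_interference_sum rho beta0 alpha n)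
           \<partial>measure_pmf (poisson_pmf (lam * m)))"
    unfolding ppp_interference_eq_bind rate by (rule nn_integral_bind[OF _ kernel]) measurable
  also have "\<dots> = (\<integral>\<^sup>+n. ennreal q ^ n \<partial>measure_pmf (poisson_pmf (lam * m)))"
    using assms
    unfolding nn_integral_exp_ppp_interference_sum[OF less_imp_le[OF assms(1)] assms(2,3)]
    by (subst nn_integral_exp_ppp_mark_measure) (auto simp: q_def h_def m_def)
  also have "\<dots> = ennreal (exp (lam * m * (q - 1)))"
    using assms m q by (intro nn_integral_poisson_pmf_power) auto
  also have "lam * m * (q - 1) = 2 * pi * lam * integral {d..R} (\<lambda>r. (h r - 1) * r)"
  proof -
    have "m * (q - 1) = 2 * pi * integral {d..R} (\<lambda>r. (h r - 1) * r)"
      using integral_two_pi_r_mult_diff_area[of d R h] h_cont m assms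
      unfolding q_def m_def by (simp add: right_diff_distrib)
    then show ?thesis
      by (metis mult.assoc mult.left_commute)
  qed
  finally show ?thesis
    unfolding h_def .
qed

lemma integral_exp_ppp_interference:
  fixes d R lam rho beta0 alpha phi u :: real
  assumes "0 < d" "d < R" "0 < phi" "0 < lam" "0 \<le> rho" "0 \<le> beta0" "0 \<le> u"
  shows "(\<integral>x. exp (- u * x) \<partial>ppp_interference lam d R rho beta0 alpha phi)
           = exp (2 * pi * lam *
               integral {d..R} (\<lambda>r. ((1 + u * rho * beta0 * r powr (- alpha)) powr (- phi) - 1) * r))"
proof -
  have "sets (ppp_interference lam d R rho beta0 alpha phi) = sets borel"
    unfolding ppp_interference_eq_bind by (rule sets_bind) auto
  then have "(\<lambda>x. exp (- u * x)) \<in> borel_measurable (ppp_interference lam d R rho beta0 alpha phi)"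
    unfolding measurable_cong_sets[OF _ refl] by simp
  from has_bochner_integral_nn_integral[OF this _ _ nn_integral_exp_ppp_interference[OF assms]]
  show ?thesis
    by (simp add: has_bochner_integral_integral_eq)
qed

section \<open>Coverage probability\<close>

lemma (in prob_space) integral_exp_total_interference:
  fixes X :: "'i \<Rightarrow> 'a \<Rightarrow> real" and d R lam rho beta0 alpha phi u :: real
  assumes indep: "indep_vars (\<lambda>_. borel) X {i, j}" and "i \<noteq> j"
    and Xi: "distr M borel (X i) = gamma_measure (phi - 1) (rho * beta0 * d powr (- alpha))"
    and Xj: "distr M borel (X j) = ppp_interference lam d R rho beta0 alpha phi"
    and "0 < d" "d < R" "1 < phi" "0 < lam" "0 < rho" "0 < beta0" "0 \<le> u"
  shows "(\<integral>\<omega>. exp (- u * (X i \<omega> + X j \<omega>)) \<partial>M)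
           = (1 + u * rho * beta0 * d powr (- alpha)) powr (1 - phi) *
             exp (2 * pi * lam * integral {d..R} (\<lambda>r. ((1 + u * rho * beta0 * r powr (- alpha)) powr (- phi) - 1) * r))"
proof -
  have X_meas [measurable]: "X i \<in> borel_measurable M" "X j \<in> borel_measurable M"
    using indep by (auto simp: indep_vars_def)
  have Xi_nonneg: "AE \<omega> in M. 0 \<le> X i \<omega>"
    using AE_gamma_measure_nonneg[of "phi - 1" "rho * beta0 * d powr (- alpha)", folded Xi]
    by (rule AE_distrD[rotated]) simp
  have "AE x in distr M borel (X j). 0 \<le> x"
    unfolding Xj using assms by (intro AE_ppp_interference_nonneg) auto
  then have Xj_nonneg: "AE \<omega> in M. 0 \<le> X j \<omega>"
    by (rule AE_distrD[rotated]) simp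
  have "(\<integral>\<omega>. exp (- u * (\<Sum>k\<in>{i, j}. X k \<omega>)) \<partial>M) = (\<Prod>k\<in>{i, j}. \<integral>x. exp (- u * x) \<partial>distr M borel (X k))"
    using Xi_nonneg Xj_nonneg \<open>0 \<le> u\<close> by (intro integral_exp_sum_indep_vars[OF _ indep]) auto
  then have "(\<integral>\<omega>. exp (- u * (X i \<omega> + X j \<omega>)) \<partial>M)
      = (\<integral>x. exp (- u * x) \<partial>gamma_measure (phi - 1) (rho * beta0 * d powr (- alpha))) *
        (\<integral>x. exp (- u * x) \<partial>ppp_interference lam d R rho beta0 alpha phi)"
    using \<open>i \<noteq> j\<close> by (simp add: Xi Xj)
  also have "\<dots> = (1 + u * rho * beta0 * d powr (- alpha)) powr (1 - phi) *
      exp (2 * pi * lam * integral {d..R} (\<lambda>r. ((1 + u * rho * beta0 * r powr (- alpha)) powr (- phi) - 1) * r))"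
  proof -
    have "(\<integral>x. exp (- u * x) \<partial>gamma_measure (phi - 1) (rho * beta0 * d powr (- alpha)))
        = (1 + u * (rho * beta0 * d powr (- alpha))) powr (- (phi - 1))"
      using assms by (intro integral_exp_gamma_measure) (auto simp: add_pos_nonneg)
    moreover have "(\<integral>x. exp (- u * x) \<partial>ppp_interference lam d R rho beta0 alpha phi)
        = exp (2 * pi * lam * integral {d..R} (\<lambda>r. ((1 + u * rho * beta0 * r powr (- alpha)) powr (- phi) - 1) * r))"
      using assms by (intro integral_exp_ppp_interference) auto
    ultimately show ?thesis
      by (simp add: mult.assoc)
  qed
  finally show ?thesis .
qed

lemma (in prob_space) integral_exp_normalized_interference:
  fixes X :: "'i \<Rightarrow> 'a \<Rightarrow> real" and d R lam rho beta0 alpha phi T \<theta> Ie s :: real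
  assumes "indep_vars (\<lambda>_. borel) X {i, j}" "i \<noteq> j"
    and "distr M borel (X i) = gamma_measure (phi - 1) (rho * beta0 * d powr (- alpha))"
    and "distr M borel (X j) = ppp_interference lam d R rho beta0 alpha phi"
    and "0 < d" "d < R" "1 < phi" "0 < lam" "0 < rho" "0 < beta0" "0 < T" "0 < \<theta>" "0 < s"
  shows "(\<integral>\<omega>. exp (- s * (T * (X i \<omega> + X j \<omega> + Ie) / \<theta>)) \<partial>M)
           = exp (- s * T * Ie / \<theta>) * (1 + s * T * rho * beta0 * d powr (- alpha) / \<theta>) powr (1 - phi) *
             exp (2 * pi * lam * integral {d..R}
               (\<lambda>r. ((1 + s * T * rho * beta0 * r powr (- alpha) / \<theta>) powr (- phi) - 1) * r))"
proof -
  have "exp (- s * (T * (X i \<omega> + X j \<omega> + Ie) / \<theta>))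
      = exp (- s * T * Ie / \<theta>) * exp (- (s * T / \<theta>) * (X i \<omega> + X j \<omega>))" for \<omega>
    unfolding exp_add[symmetric] by (simp add: add_divide_distrib diff_divide_distrib algebra_simps)
  then have "(\<integral>\<omega>. exp (- s * (T * (X i \<omega> + X j \<omega> + Ie) / \<theta>)) \<partial>M)
      = exp (- s * T * Ie / \<theta>) * (\<integral>\<omega>. exp (- (s * T / \<theta>) * (X i \<omega> + X j \<omega>)) \<partial>M)"
    by simp
  then show ?thesis
    using integral_exp_total_interference[OF assms(1-10), of "s * T / \<theta>"] assms(11-13) by simp
qed

theorem lemma8:
  fixes M :: "'w measure"
    and S0 IB0 IB :: "'w \<Rightarrow> real"
    and T thetaS0 Ie rhoB beta0 alpha1 lamB phiB d00 areaA :: real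
    and kS0 :: nat
  assumes "prob_space M"
    and "T > 0" and "thetaS0 > 0" and "kS0 > 0" and "Ie \<ge> 0"
    and "rhoB > 0" and "beta0 > 0" and "alpha1 > 0" and "lamB > 0" and "phiB > 1"
    and "areaA > 0" and "0 < d00" and "d00 < sqrt (areaA / pi)"
    and "distr M borel S0 = gamma_measure (real kS0) thetaS0"
    and "distr M borel IB0 = gamma_measure (phiB - 1) (rhoB * beta0 * d00 powr (- alpha1))"
    and "distr M borel IB = ppp_interference lamB d00 (sqrt (areaA / pi)) rhoB beta0 alpha1 phiB"
    and "prob_space.indep_vars M (\<lambda>_. borel)
           (\<lambda>i::nat. if i = 0 then S0 else if i = 1 then IB0 else IB) {0, 1, 2}"
  shows "measure M {\<omega> \<in> space M. S0 \<omega> > T * (IB0 \<omega> + IB \<omega> + Ie)} =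
    (let LIB0 = (\<lambda>s::real. (1 + s * T * rhoB * beta0 * d00 powr (- alpha1) / thetaS0) powr (1 - phiB));
         LIB = (\<lambda>s::real. exp (2 * pi * lamB *
                  integral {d00..sqrt (areaA / pi)}
                    (\<lambda>r. ((1 + s * T * rhoB * beta0 * r powr (- alpha1) / thetaS0) powr (- phiB) - 1) * r)));
         F = (\<lambda>s::real. exp (- s * T * Ie / thetaS0) * LIB0 s * LIB s)
     in (\<Sum>i<kS0. (-1) ^ i / fact i * (deriv ^^ i) F 1))"
proof -
  interpret prob_space M by fact
  define X where "X = (\<lambda>i::nat. if i = 0 then S0 else if i = 1 then IB0 else IB)"
  have indep: "indep_vars (\<lambda>_. borel) X {0, 1, 2}"
    using assms(17) unfolding X_def .
  have X_eq: "X 1 = IB0" "X 2 = IB"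
    by (simp_all add: X_def)
  have [measurable]: "IB0 \<in> borel_measurable M" "IB \<in> borel_measurable M"
    using indep by (auto simp: indep_vars_def X_def)
  have "AE \<omega> in M. 0 \<le> IB0 \<omega>"
    using AE_gamma_measure_nonneg[of "phiB - 1" "rhoB * beta0 * d00 powr (- alpha1)", folded assms(15)]
    by (rule AE_distrD[rotated]) simp
  moreover have "AE x in distr M borel IB. 0 \<le> x"
    unfolding assms(16) using assms by (intro AE_ppp_interference_nonneg) auto
  then have "AE \<omega> in M. 0 \<le> IB \<omega>"
    by (rule AE_distrD[rotated]) simp
  ultimately have nonneg: "AE \<omega> in M. 0 \<le> T * (IB0 \<omega> + IB \<omega> + Ie)"
    by eventually_elim (use assms in simp)
  have "indep_var borel S0 borel (\<lambda>\<omega>. T * (IB0 \<omega> + IB \<omega> + Ie))"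
    using indep_var_compose[OF indep_vars_sum[of "{1, 2}" 0 X], of id borel "\<lambda>z. T * (z + Ie)" borel] indep
    by (simp add: X_def comp_def)
  moreover note laplace = integral_exp_normalized_interference[OF indep_vars_subset[OF indep, of "{1, 2}"] _
      assms(15,16)[folded X_eq] assms(12,13,10,9,6,7,2,3), unfolded X_eq]
  ultimately show ?thesis
    unfolding Let_def using eventually_nhds_in_open[of "{0::real<..}" 1] nonneg
    by (intro prob_gamma_greater_higher_deriv_laplace[OF _ assms(14,4,3)])
       (auto elim!: eventually_mono intro!: laplace[symmetric])
qed

end
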